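(* Let $n$ be even, let $M_0$ be a fixed perfect matching of $K_n$ and let $M_1$ be a uniformly random perfect matching of $K_n$. With probability $1-o(n^{-0.51})$: (a) the graph $M_0\cup M_1$ has at most $10\log_2 n$ connected components; (b) at most $n_b$ vertices lie in components of $M_0\cup M_1$ having at most $n_c$ vertices.
   Context: $M_0\cup M_1$ is the (multi)graph on $[n]$ with edge set $M_0\cup M_1$; its components are cycles alternating between $M_0$ and $M_1$ (a common edge counts as a component of size 2). $n_b=\frac{n\log\log\log n}{\log\log n}$ and $n_c=\frac{200n}{\log n}$, logarithms natural unless indicated. *)

theory Defs
  imports Complex_Main
begin

definition perfect_matchings :: "nat \<Rightarrow> nat set set set" where
  "perfect_matchings n =
     {M. (\<forall>e\<in>M. \<exists>u v. e = {u, v} \<and> u \<noteq> v \<and> u < n \<and> v < n)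
         \<and> (\<forall>v<n. \<exists>!e. e \<in> M \<and> v \<in> e)}"

definition components :: "nat \<Rightarrow> nat set set \<Rightarrow> nat set set" where
  "components n E = {..<n} // ({(u, v). {u, v} \<in> E}\<^sup>*)"

definition n_b :: "nat \<Rightarrow> real" where
  "n_b n = real n * ln (ln (ln (real n))) / ln (ln (real n))"

definition n_c :: "nat \<Rightarrow> real" where
  "n_c n = 200 * real n / ln (real n)"

definition good_event :: "nat \<Rightarrow> nat set set \<Rightarrow> nat set set \<Rightarrow> bool" where
  "good_event n M0 M1 \<longleftrightarrow>
     real (card (components n (M0 \<union> M1))) \<le> 10 * log 2 (real n)
     \<and> real (card (\<Union>{C \<in> components n (M0 \<union> M1). real (card C) \<le> n_c n})) \<le> n_b n"

definition fail_prob :: "nat \<Rightarrow> nat set set \<Rightarrow> real" where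
  "fail_prob n M0 =
     real (card {M1 \<in> perfect_matchings n. \<not> good_event n M0 M1})
     / real (card (perfect_matchings n))"

end

theory Submission
  imports Defs "HOL-Real_Asymp.Real_Asymp"
begin

text \<open>
  First moment method for tuples of small components. Fix a weight h and a size bound s and
  consider the sum, over ordered r-tuples of distinct components of M0 \<union> M1 with at most s
  vertices, of the product of the weights of their sizes. Deleting one component on 2a vertices
  leaves perfect matchings M0, M1 on the remaining vertices, while M1 restricted to the
  component is one of at most 2^(a-1) (a-1)! matchings closing its a edges of M0 into a single
  cycle. An induction on r therefore bounds the average of this moment over M1 by L^r with
  L = sum over 1 \<le> a \<le> s/2 of 2 h(2a) / a.

  For (a), take h = 1 and r about log2 n: with more than 10 log2 n components, fewer than 2r of
  them are large, so the moment is at least (7 log2 n)^r, whereas L \<le> 2 (1 + ln n); Markov's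
  inequality gives probability at most 2/n. For (b), take h(k) = k, s = n_c and
  r = n_b / (2 n_c): with more than n_b vertices in small components the moment is at least
  (n_b/2)^r, whereas L \<le> 2 n_c, and the resulting bound (4 n_c / n_b)^(r-1) is negligible
  against n^(-0.51).
\<close>

definition perfect_matchings_on :: "'a set \<Rightarrow> 'a set set set" where
  "perfect_matchings_on V = {M. (\<forall>e\<in>M. \<exists>u v. e = {u, v} \<and> u \<noteq> v \<and> u \<in> V \<and> v \<in> V)
         \<and> (\<forall>v\<in>V. \<exists>!e. e \<in> M \<and> v \<in> e)}"

lemma perfect_matchings_eq: "perfect_matchings n = perfect_matchings_on {..<n}"
  unfolding perfect_matchings_def perfect_matchings_on_def by auto

lemma perfect_matching_edge:
  "M \<in> perfect_matchings_on V \<Longrightarrow> e \<in> M \<Longrightarrow> \<exists>u v. e = {u, v} \<and> u \<noteq> v \<and> u \<in> V \<and> v \<in> V"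
  unfolding perfect_matchings_on_def by blast

lemma perfect_matching_edge_subset: "M \<in> perfect_matchings_on V \<Longrightarrow> e \<in> M \<Longrightarrow> e \<subseteq> V"
  using perfect_matching_edge by blast

lemma perfect_matching_covers: "M \<in> perfect_matchings_on V \<Longrightarrow> v \<in> V \<Longrightarrow> \<exists>e\<in>M. v \<in> e"
  unfolding perfect_matchings_on_def by blast

lemma perfect_matching_edge_unique:
  assumes "M \<in> perfect_matchings_on V" "v \<in> e" "v \<in> e'" "e \<in> M" "e' \<in> M"
  shows "e = e'"
proof -
  have "v \<in> V" using assms perfect_matching_edge_subset by blast
  then show ?thesis using assms unfolding perfect_matchings_on_def by blast
qed

lemma finite_perfect_matching: "finite V \<Longrightarrow> M \<in> perfect_matchings_on V \<Longrightarrow> finite M"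
  by (rule finite_subset[of _ "Pow V"]) (auto dest: perfect_matching_edge_subset)

lemma finite_perfect_matchings_on: "finite V \<Longrightarrow> finite (perfect_matchings_on V)"
  by (rule finite_subset[of _ "Pow (Pow V)"]) (auto dest: perfect_matching_edge_subset)

lemma perfect_matching_mate_unique:
  assumes "M \<in> perfect_matchings_on V" "{x,y} \<in> M" "{x,z} \<in> M"
  shows "y = z"
proof -
  have "{x,y} = {x,z}" using perfect_matching_edge_unique[OF assms(1), of x] assms by auto
  then show ?thesis by (metis doubleton_eq_iff)
qed

lemma perfect_matching_remove_edge:
  assumes M: "M \<in> perfect_matchings_on V" and e: "{x,y} \<in> M"
  shows "M - {{x,y}} \<in> perfect_matchings_on (V - {x,y})"
  unfolding perfect_matchings_on_def
proof (intro CollectI conjI ballI)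
  have disj: "x \<notin> e' \<and> y \<notin> e'" if "e' \<in> M - {{x,y}}" for e'
    using that perfect_matching_edge_unique[OF M, of _ e' "{x,y}"] e by blast
  fix e' assume e': "e' \<in> M - {{x,y}}"
  then show "\<exists>u v. e' = {u, v} \<and> u \<noteq> v \<and> u \<in> V - {x, y} \<and> v \<in> V - {x, y}"
    using perfect_matching_edge[OF M] disj by fastforce
next
  fix w assume w: "w \<in> V - {x,y}"
  then obtain e' where e': "e' \<in> M" "w \<in> e'" using perfect_matching_covers[OF M, of w] by auto
  then show "\<exists>!e. e \<in> M - {{x, y}} \<and> w \<in> e"
    using w perfect_matching_edge_unique[OF M, of w] by (intro ex1I[of _ e']) auto
qed

lemma perfect_matching_insert_edge:
  assumes M: "M \<in> perfect_matchings_on W" and xy: "x \<notin> W" "y \<notin> W" "x \<noteq> y"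
  shows "insert {x,y} M \<in> perfect_matchings_on (insert x (insert y W))"
  unfolding perfect_matchings_on_def
proof (intro CollectI conjI ballI)
  fix e assume "e \<in> insert {x,y} M"
  then show "\<exists>u v. e = {u, v} \<and> u \<noteq> v \<and> u \<in> insert x (insert y W) \<and> v \<in> insert x (insert y W)"
    using perfect_matching_edge[OF M] xy by blast
next
  have new: "x \<notin> e \<and> y \<notin> e" if "e \<in> M" for e
    using perfect_matching_edge_subset[OF M that] xy by blast
  fix w assume w: "w \<in> insert x (insert y W)"
  show "\<exists>!e. e \<in> insert {x, y} M \<and> w \<in> e"
  proof (cases "w \<in> W")
    case True
    then obtain e where e: "e \<in> M" "w \<in> e" using perfect_matching_covers[OF M, of w] by auto
    then show ?thesis
      using perfect_matching_edge_unique[OF M, of w] True xy by (intro ex1I[of _ e]) auto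
  next
    case False
    then show ?thesis using w new by (intro ex1I[of _ "{x,y}"]) auto
  qed
qed

lemma perfect_matchings_on_empty: "perfect_matchings_on {} = {{}}"
  unfolding perfect_matchings_on_def by auto

lemma perfect_matchings_on_decomp:
  assumes x: "x \<in> V"
  shows "perfect_matchings_on V =
    (\<Union>y\<in>V-{x}. insert {x,y} ` perfect_matchings_on (V - {x,y}))"
proof
  show "perfect_matchings_on V \<subseteq> (\<Union>y\<in>V-{x}. insert {x,y} ` perfect_matchings_on (V - {x,y}))"
  proof
    fix M assume M: "M \<in> perfect_matchings_on V"
    obtain e where e: "e \<in> M" "x \<in> e" using perfect_matching_covers[OF M x] by auto
    obtain u v where "e = {u,v}" "u \<noteq> v" "u \<in> V" "v \<in> V"
      using perfect_matching_edge[OF M e(1)] by blast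
    then obtain y where y: "e = {x,y}" "y \<in> V - {x}" using e(2) by auto
    have "M = insert {x,y} (M - {{x,y}})" using e y by auto
    moreover have "M - {{x,y}} \<in> perfect_matchings_on (V - {x,y})"
      using perfect_matching_remove_edge[OF M] e y by simp
    ultimately show "M \<in> (\<Union>y\<in>V-{x}. insert {x,y} ` perfect_matchings_on (V - {x,y}))"
      using y by blast
  qed
  show "(\<Union>y\<in>V-{x}. insert {x,y} ` perfect_matchings_on (V - {x,y})) \<subseteq> perfect_matchings_on V"
  proof
    fix M' assume "M' \<in> (\<Union>y\<in>V-{x}. insert {x,y} ` perfect_matchings_on (V - {x,y}))"
    then obtain y M where y: "y \<in> V" "y \<noteq> x" and M: "M \<in> perfect_matchings_on (V - {x,y})"
      and M': "M' = insert {x,y} M" by blast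
    have "insert {x,y} M \<in> perfect_matchings_on (insert x (insert y (V - {x,y})))"
      using perfect_matching_insert_edge[OF M] y by simp
    moreover have "insert x (insert y (V - {x,y})) = V" using x y by auto
    ultimately show "M' \<in> perfect_matchings_on V" using M' by simp
  qed
qed

fun num_matchings :: "nat \<Rightarrow> nat" where
  "num_matchings 0 = 1" | "num_matchings (Suc k) = (2*k+1) * num_matchings k"

lemma num_matchings_pos: "num_matchings k > 0"
  by (induction k) auto

lemma card_perfect_matchings_on:
  "finite V \<Longrightarrow> card V = 2*m \<Longrightarrow> card (perfect_matchings_on V) = num_matchings m"
proof (induction m arbitrary: V)
  case 0
  then show ?case by (simp add: perfect_matchings_on_empty)
next
  case (Suc m)
  then obtain x where x: "x \<in> V" by fastforce
  let ?f = "\<lambda>y. insert {x,y} ` perfect_matchings_on (V - {x,y})"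
  have disj: "?f y \<inter> ?f y' = {}" if y: "y \<in> V-{x}" "y' \<in> V-{x}" "y \<noteq> y'" for y y'
  proof (rule ccontr)
    assume "?f y \<inter> ?f y' \<noteq> {}"
    then obtain N where N: "N \<in> ?f y" "N \<in> ?f y'" by blast
    have "N \<in> (\<Union>y\<in>V-{x}. ?f y)" using N(1) y(1) by blast
    then have NV: "N \<in> perfect_matchings_on V" using perfect_matchings_on_decomp[OF x] by simp
    have "{x,y} \<in> N" using N(1) by (auto elim: imageE)
    moreover have "{x,y'} \<in> N" using N(2) by (auto elim: imageE)
    ultimately show False using perfect_matching_mate_unique[OF NV] y(3) by metis
  qed
  have card_f: "card (?f y) = num_matchings m" if y: "y \<in> V - {x}" for y
  proof -
    have "{x,y} \<notin> N" if "N \<in> perfect_matchings_on (V - {x,y})" for N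
      using perfect_matching_edge_subset[OF that] by blast
    then have "inj_on (insert {x,y}) (perfect_matchings_on (V - {x,y}))"
      by (intro inj_onI) (metis insert_ident)
    moreover have "card {x,y} = 2" using y by auto
    then have "card (V - {x,y}) = 2*m" using Suc.prems x y by (simp add: card_Diff_subset)
    then have "card (perfect_matchings_on (V - {x,y})) = num_matchings m"
      using Suc.IH Suc.prems(1) by simp
    ultimately show ?thesis using card_image by metis
  qed
  have "card (perfect_matchings_on V) = (\<Sum>y\<in>V-{x}. card (?f y))"
    unfolding perfect_matchings_on_decomp[OF x]
  proof (rule card_UN_disjoint)
    show "finite (V - {x})" using Suc.prems(1) by simp
    show "\<forall>y\<in>V - {x}. finite (?f y)" using Suc.prems(1) by (simp add: finite_perfect_matchings_on)
    show "\<forall>y\<in>V - {x}. \<forall>y'\<in>V - {x}. y \<noteq> y' \<longrightarrow> ?f y \<inter> ?f y' = {}"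
      using disj by blast
  qed
  also have "\<dots> = (2*m+1) * num_matchings m" using Suc.prems x card_f by simp
  finally show ?case by simp
qed

definition edge_rel :: "'a set set \<Rightarrow> ('a \<times> 'a) set" where
  "edge_rel E = {(u,v). {u,v} \<in> E}"

definition components_on :: "'a set \<Rightarrow> 'a set set \<Rightarrow> 'a set set" where
  "components_on V E = V // (edge_rel E)\<^sup>*"

definition restrict_edges :: "'a set set \<Rightarrow> 'a set \<Rightarrow> 'a set set" where
  "restrict_edges M S = {e\<in>M. e \<subseteq> S}"

lemma components_eq_components_on: "components n E = components_on {..<n} E"
  by (simp add: components_def components_on_def edge_rel_def)

lemma edge_rel_rtrancl_sym: "(u,v) \<in> (edge_rel E)\<^sup>* \<Longrightarrow> (v,u) \<in> (edge_rel E)\<^sup>*"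
proof -
  have "sym (edge_rel E)" unfolding edge_rel_def sym_def by (auto simp: insert_commute)
  then show "(u,v) \<in> (edge_rel E)\<^sup>* \<Longrightarrow> (v,u) \<in> (edge_rel E)\<^sup>*"
    by (metis sym_rtrancl symD)
qed

lemma rtrancl_closed_subset:
  assumes "(u,v) \<in> R\<^sup>*" "u \<in> S" "\<And>a b. (a,b) \<in> R \<Longrightarrow> a \<in> S \<Longrightarrow> b \<in> S"
  shows "v \<in> S \<and> (u,v) \<in> (R \<inter> S \<times> S)\<^sup>*"
  using assms(1)
proof (induction rule: rtrancl_induct)
  case base
  then show ?case using assms(2) by simp
next
  case (step y z)
  then have "z \<in> S" using assms(3) by blast
  moreover have "(y,z) \<in> R \<inter> S \<times> S" using step \<open>z \<in> S\<close> by blast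
  ultimately show ?case using step rtrancl_into_rtrancl by metis
qed

lemma rtrancl_map:
  assumes "(u,v) \<in> R\<^sup>*" "\<And>a b. (a,b) \<in> R \<Longrightarrow> (f a, f b) \<in> R'\<^sup>*"
  shows "(f u, f v) \<in> R'\<^sup>*"
  using assms(1)
proof (induction rule: rtrancl_induct)
  case (step y z)
  then show ?case using assms(2) rtrancl_trans by metis
qed simp

context
  fixes V :: "'a set" and E :: "'a set set"
  assumes edges_subset: "\<forall>e\<in>E. e \<subseteq> V"
begin

lemma component_onE:
  assumes "C \<in> components_on V E"
  obtains x where "x \<in> V" "C = (edge_rel E)\<^sup>* `` {x}"
  using assms unfolding components_on_def quotient_def by blast

lemma component_on_subset: "C \<in> components_on V E \<Longrightarrow> C \<subseteq> V"
proof
  fix v assume C: "C \<in> components_on V E" and v: "v \<in> C"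
  obtain x where x: "x \<in> V" "C = (edge_rel E)\<^sup>* `` {x}" using component_onE[OF C] .
  have "(a,b) \<in> edge_rel E \<Longrightarrow> b \<in> V" for a b using edges_subset unfolding edge_rel_def by blast
  then show "v \<in> V" using rtrancl_closed_subset[of x v "edge_rel E" V] x v by blast
qed

lemma component_on_closed:
  assumes "C \<in> components_on V E" "u \<in> C" "(u,w) \<in> edge_rel E"
  shows "w \<in> C"
proof -
  obtain x where x: "C = (edge_rel E)\<^sup>* `` {x}" using component_onE[OF assms(1)] by blast
  then have "(x,u) \<in> (edge_rel E)\<^sup>*" using assms(2) by blast
  then have "(x,w) \<in> (edge_rel E)\<^sup>*" using assms(3) by (rule rtrancl_into_rtrancl)
  then show ?thesis using x by blast
qed

lemma component_on_connected:
  assumes "C \<in> components_on V E" "u \<in> C" "w \<in> C"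
  shows "(u,w) \<in> (edge_rel E)\<^sup>*"
proof -
  obtain x where "C = (edge_rel E)\<^sup>* `` {x}" using component_onE[OF assms(1)] by blast
  then have "(x,u) \<in> (edge_rel E)\<^sup>*" "(x,w) \<in> (edge_rel E)\<^sup>*" using assms by blast+
  then show ?thesis by (metis edge_rel_rtrancl_sym rtrancl_trans)
qed

lemma mem_component_on_iff:
  assumes C: "C \<in> components_on V E"
  shows "u \<in> C \<longleftrightarrow> (edge_rel E)\<^sup>* `` {u} = C"
proof
  assume u: "u \<in> C"
  show "(edge_rel E)\<^sup>* `` {u} = C"
  proof
    show "(edge_rel E)\<^sup>* `` {u} \<subseteq> C"
    proof
      fix w assume "w \<in> (edge_rel E)\<^sup>* `` {u}"
      then have "(u,w) \<in> (edge_rel E)\<^sup>*" by simp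
      then show "w \<in> C" using u by induction (auto intro: component_on_closed[OF C])
    qed
    show "C \<subseteq> (edge_rel E)\<^sup>* `` {u}" using component_on_connected[OF C u] by blast
  qed
qed auto

lemma component_on_nonempty: "C \<in> components_on V E \<Longrightarrow> C \<noteq> {}"
  by (elim component_onE) auto

lemma components_on_disjoint:
  assumes "C \<in> components_on V E" "D \<in> components_on V E" "C \<noteq> D"
  shows "C \<inter> D = {}"
proof (rule ccontr)
  assume "C \<inter> D \<noteq> {}"
  then obtain u where "u \<in> C" "u \<in> D" by blast
  then show False using mem_component_on_iff[OF assms(1)] mem_component_on_iff[OF assms(2)] assms(3)
    by simp
qed

lemma finite_components_on: "finite V \<Longrightarrow> finite (components_on V E)"
  by (rule finite_subset[of _ "Pow V"]) (auto dest: component_on_subset)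

lemma sum_card_components_on:
  assumes "finite V" "F \<subseteq> components_on V E"
  shows "(\<Sum>C\<in>F. card C) = card (\<Union>F)"
proof (rule card_Union_disjoint[symmetric])
  show "pairwise disjnt F"
    using assms(2) components_on_disjoint unfolding pairwise_def disjnt_def by blast
  show "A \<in> F \<Longrightarrow> finite A" for A
    using assms component_on_subset finite_subset by blast
qed

end

definition connecting_matchings :: "'a set set \<Rightarrow> 'a set \<Rightarrow> 'a set set set" where
  "connecting_matchings M0 C =
     {M \<in> perfect_matchings_on C. \<forall>u\<in>C. \<forall>v\<in>C. (u,v) \<in> (edge_rel (M0 \<union> M))\<^sup>*}"

lemma connecting_matchings_subset: "connecting_matchings M0 C \<subseteq> perfect_matchings_on C"
  unfolding connecting_matchings_def by auto

lemma perfect_matching_restrict: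
  assumes M: "M \<in> perfect_matchings_on V" and S: "S \<subseteq> V"
    and splits: "\<forall>e\<in>M. e \<subseteq> S \<or> e \<subseteq> V - S"
  shows "restrict_edges M S \<in> perfect_matchings_on S"
  unfolding perfect_matchings_on_def
proof (intro CollectI conjI ballI)
  fix e assume "e \<in> restrict_edges M S"
  then have e: "e \<in> M" "e \<subseteq> S" unfolding restrict_edges_def by auto
  then obtain u v where "e = {u,v}" "u \<noteq> v" using perfect_matching_edge[OF M] by blast
  then show "\<exists>u v. e = {u, v} \<and> u \<noteq> v \<and> u \<in> S \<and> v \<in> S" using e(2) by auto
next
  fix w assume w: "w \<in> S"
  then obtain e where e: "e \<in> M" "w \<in> e" using perfect_matching_covers[OF M, of w] S by auto
  then have "e \<subseteq> S" using splits w by blast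
  then have "e \<in> restrict_edges M S" using e unfolding restrict_edges_def by simp
  moreover have "f = e" if "f \<in> restrict_edges M S" "w \<in> f" for f
    using perfect_matching_edge_unique[OF M, of w f e] e that unfolding restrict_edges_def by simp
  ultimately show "\<exists>!e. e \<in> restrict_edges M S \<and> w \<in> e" using e(2) by blast
qed

lemma perfect_matching_restrict_compl:
  assumes M: "M \<in> perfect_matchings_on V" and splits: "\<forall>e\<in>M. e \<subseteq> S \<or> e \<subseteq> V - S"
  shows "restrict_edges M (V - S) \<in> perfect_matchings_on (V - S)"
proof (rule perfect_matching_restrict[OF M])
  show "\<forall>e\<in>M. e \<subseteq> V - S \<or> e \<subseteq> V - (V - S)"
    using splits perfect_matching_edge_subset[OF M] by blast
qed auto

locale matching_component =
  fixes V :: "'a set" and M0 M1 :: "'a set set" and C :: "'a set"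
  assumes finite_V: "finite V"
    and M0: "M0 \<in> perfect_matchings_on V" and M1: "M1 \<in> perfect_matchings_on V"
    and C: "C \<in> components_on V (M0 \<union> M1)"
begin

lemma edges_subset: "\<forall>e\<in>M0 \<union> M1. e \<subseteq> V"
  using perfect_matching_edge_subset[OF M0] perfect_matching_edge_subset[OF M1] by auto

lemma C_subset: "C \<subseteq> V"
  using component_on_subset[OF edges_subset C] .

lemma C_nonempty: "C \<noteq> {}"
  using component_on_nonempty[OF edges_subset C] .

lemma edge_splits: "e \<in> M0 \<union> M1 \<Longrightarrow> e \<subseteq> C \<or> e \<subseteq> V - C"
proof -
  assume e: "e \<in> M0 \<union> M1"
  then obtain u v where uv: "e = {u,v}"
    using perfect_matching_edge[OF M0, of e] perfect_matching_edge[OF M1, of e] by auto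
  have "(u,v) \<in> edge_rel (M0 \<union> M1)" "(v,u) \<in> edge_rel (M0 \<union> M1)"
    using e uv unfolding edge_rel_def by (auto simp: insert_commute)
  then have "u \<in> C \<longleftrightarrow> v \<in> C" using component_on_closed[OF edges_subset C] by blast
  moreover have "e \<subseteq> V" using e edges_subset by blast
  ultimately show ?thesis using uv by auto
qed

lemma M0_splits: "\<forall>e\<in>M0. e \<subseteq> C \<or> e \<subseteq> V - C"
  and M1_splits: "\<forall>e\<in>M1. e \<subseteq> C \<or> e \<subseteq> V - C"
  using edge_splits by auto

lemma M1_eq_Un_restrict: "M1 = restrict_edges M1 C \<union> restrict_edges M1 (V - C)"
  using M1_splits unfolding restrict_edges_def by auto

lemma restrict_M1_connecting: "restrict_edges M1 C \<in> connecting_matchings (restrict_edges M0 C) C"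
  unfolding connecting_matchings_def
proof (intro CollectI conjI ballI)
  show "restrict_edges M1 C \<in> perfect_matchings_on C"
    using perfect_matching_restrict[OF M1 C_subset M1_splits] .
  fix u v assume u: "u \<in> C" and v: "v \<in> C"
  have "(u,v) \<in> (edge_rel (M0 \<union> M1) \<inter> C \<times> C)\<^sup>*"
    using rtrancl_closed_subset[OF component_on_connected[OF edges_subset C u v] u]
      component_on_closed[OF edges_subset C] by blast
  moreover have "edge_rel (M0 \<union> M1) \<inter> C \<times> C \<subseteq> edge_rel (restrict_edges M0 C \<union> restrict_edges M1 C)"
    unfolding edge_rel_def restrict_edges_def by auto
  ultimately show "(u,v) \<in> (edge_rel (restrict_edges M0 C \<union> restrict_edges M1 C))\<^sup>*"
    using rtrancl_mono by blast
qed

lemma Image_rtrancl_outside: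
  assumes u: "u \<in> V - C"
  shows "(edge_rel (restrict_edges M0 (V - C) \<union> restrict_edges M1 (V - C)))\<^sup>* `` {u}
       = (edge_rel (M0 \<union> M1))\<^sup>* `` {u}"
    (is "?R'\<^sup>* `` {u} = ?R\<^sup>* `` {u}")
proof
  show "?R'\<^sup>* `` {u} \<subseteq> ?R\<^sup>* `` {u}"
    using rtrancl_mono[of ?R' ?R] unfolding edge_rel_def restrict_edges_def by blast
  have outside: "b \<in> V - C" if "(a,b) \<in> ?R" "a \<in> V - C" for a b
  proof -
    have "(b,a) \<in> ?R" "{a,b} \<in> M0 \<union> M1"
      using that(1) unfolding edge_rel_def by (auto simp: insert_commute)
    moreover from this(2) have "b \<in> V" using edges_subset by blast
    ultimately show ?thesis using component_on_closed[OF edges_subset C, of b a] that(2) by auto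
  qed
  have "?R \<inter> (V - C) \<times> (V - C) \<subseteq> ?R'" unfolding edge_rel_def restrict_edges_def by auto
  then show "?R\<^sup>* `` {u} \<subseteq> ?R'\<^sup>* `` {u}"
    using rtrancl_closed_subset[of u _ ?R "V - C"] outside u rtrancl_mono by blast
qed

lemma components_on_remove_component:
  "components_on (V - C) (restrict_edges M0 (V - C) \<union> restrict_edges M1 (V - C))
     = components_on V (M0 \<union> M1) - {C}"
proof -
  let ?R = "edge_rel (M0 \<union> M1)"
  have "components_on (V - C) (restrict_edges M0 (V - C) \<union> restrict_edges M1 (V - C))
      = (\<lambda>u. ?R\<^sup>* `` {u}) ` (V - C)"
    unfolding components_on_def quotient_def using Image_rtrancl_outside by auto
  also have "\<dots> = components_on V (M0 \<union> M1) - {C}"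
  proof
    show "(\<lambda>u. ?R\<^sup>* `` {u}) ` (V - C) \<subseteq> components_on V (M0 \<union> M1) - {C}"
      using mem_component_on_iff[OF edges_subset C] unfolding components_on_def quotient_def
      by auto
    show "components_on V (M0 \<union> M1) - {C} \<subseteq> (\<lambda>u. ?R\<^sup>* `` {u}) ` (V - C)"
    proof
      fix D assume D: "D \<in> components_on V (M0 \<union> M1) - {C}"
      then obtain u where u: "u \<in> V" "D = ?R\<^sup>* `` {u}"
        using component_onE[OF edges_subset, of D] by auto
      have "u \<notin> C" using mem_component_on_iff[OF edges_subset C] u D by auto
      then show "D \<in> (\<lambda>u. ?R\<^sup>* `` {u}) ` (V - C)" using u by auto
    qed
  qed
  finally show ?thesis .
qed

end

definition mate :: "'a set set \<Rightarrow> 'a \<Rightarrow> 'a" where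
  "mate M v = (THE w. {v,w} \<in> M)"

lemma mate_eq: "M \<in> perfect_matchings_on V \<Longrightarrow> {v,w} \<in> M \<Longrightarrow> mate M v = w"
  unfolding mate_def using perfect_matching_mate_unique by (metis the_equality)

lemma mate_edge:
  assumes M: "M \<in> perfect_matchings_on V" and v: "v \<in> V"
  shows "{v, mate M v} \<in> M"
proof -
  obtain e where e: "e \<in> M" "v \<in> e" using perfect_matching_covers[OF M v] by auto
  obtain a b where "e = {a,b}" using perfect_matching_edge[OF M e(1)] by auto
  then obtain w where "e = {v,w}" using e(2) by auto
  then show ?thesis using mate_eq[OF M] e(1) by simp
qed

lemma mate_mem:
  assumes M: "M \<in> perfect_matchings_on V" and v: "v \<in> V"
  shows "mate M v \<in> V" "mate M v \<noteq> v"
proof -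
  have e: "{v, mate M v} \<in> M" using mate_edge[OF M v] .
  then show "mate M v \<in> V" using perfect_matching_edge_subset[OF M] by auto
  obtain a b where "{v, mate M v} = {a,b}" "a \<noteq> b" using perfect_matching_edge[OF M e] by blast
  then show "mate M v \<noteq> v" by (metis doubleton_eq_iff insert_absorb2)
qed

text \<open>
  If M closes the M0-edge {x, x'} into one alternating cycle on more than two vertices, the
  cycle contains the path mate M x, x, x', mate M x'; replacing this path by the single edge
  joining its ends leaves one alternating cycle on the other vertices, and M can be read off
  from the result together with mate M x'.
\<close>
definition shortcut :: "'a \<Rightarrow> 'a \<Rightarrow> 'a set set \<Rightarrow> 'a set set" where
  "shortcut x x' M = insert {mate M x', mate M x} (M - {{x', mate M x'}, {x, mate M x}})"

locale shortcut_setting =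
  fixes C :: "'a set" and M0 :: "'a set set" and x :: 'a
  assumes M0: "M0 \<in> perfect_matchings_on C" and x: "x \<in> C" and card_C: "2 < card C"
begin

definition x' :: 'a where "x' = mate M0 x"

definition C' :: "'a set" where "C' = C - {x, x'}"

definition M0' :: "'a set set" where "M0' = M0 - {{x, x'}}"

lemma M0_edge: "{x,x'} \<in> M0"
  unfolding x'_def using mate_edge[OF M0 x] .

lemma x': "x' \<in> C" "x' \<noteq> x"
  unfolding x'_def using mate_mem[OF M0 x] by auto

lemma M0': "M0' \<in> perfect_matchings_on C'"
  unfolding M0'_def C'_def using perfect_matching_remove_edge[OF M0 M0_edge] .

lemma finite_C': "finite C'"
  using card_C unfolding C'_def by (simp add: card_ge_0_finite)

lemma card_C': "card C' = card C - 2"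
  using card_C x x' unfolding C'_def by (simp add: card_Diff_subset card_ge_0_finite)

context
  fixes M assumes M_connecting: "M \<in> connecting_matchings M0 C"
begin

lemma M_perfect: "M \<in> perfect_matchings_on C"
  using M_connecting unfolding connecting_matchings_def by simp

lemma connected: "u \<in> C \<Longrightarrow> v \<in> C \<Longrightarrow> (u,v) \<in> (edge_rel (M0 \<union> M))\<^sup>*"
  using M_connecting unfolding connecting_matchings_def by simp

text \<open>Otherwise both M0 and M pair x with x', and {x, x'} would be all of C.\<close>
lemma mate_x'_neq_x: "mate M x' \<noteq> x"
proof
  assume yx: "mate M x' = x"
  then have x'_x: "{x',x} \<in> M" using mate_edge[OF M_perfect x'(1)] by simp
  then have zx': "mate M x = x'" using mate_eq[OF M_perfect] by (simp add: insert_commute)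
  have "mate M0 x = x'" "mate M0 x' = x"
    using x'_def mate_eq[OF M0] M0_edge by (auto simp: insert_commute)
  note mates_S = this yx zx'
  let ?S = "{x,x'}"
  have closed: "b \<in> ?S" if "(a,b) \<in> edge_rel (M0 \<union> M)" "a \<in> ?S" for a b
  proof -
    have "{a,b} \<in> M0 \<or> {a,b} \<in> M" using that(1) unfolding edge_rel_def by auto
    then have "b = mate M0 a \<or> b = mate M a" using mate_eq[OF M0] mate_eq[OF M_perfect] by metis
    then show ?thesis using that(2) mates_S by auto
  qed
  have "C \<subseteq> ?S"
    using rtrancl_closed_subset[OF connected[OF x], of _ ?S] closed by blast
  then have "card C \<le> card ?S" using card_mono[of ?S C] by simp
  also have "\<dots> \<le> 2" by (simp add: card_insert_le_m1)
  finally show False using card_C by simp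
qed

lemma mates:
  "{x, mate M x} \<in> M" "{x', mate M x'} \<in> M" "mate M x \<in> C" "mate M x' \<in> C"
  "mate M x \<noteq> x" "mate M x' \<noteq> x'" "mate M x' \<noteq> x" "mate M x \<noteq> x'" "mate M x' \<noteq> mate M x"
proof -
  show e: "{x, mate M x} \<in> M" "{x', mate M x'} \<in> M"
    using mate_edge[OF M_perfect] x x'(1) by auto
  show "mate M x \<in> C" "mate M x' \<in> C" "mate M x \<noteq> x" "mate M x' \<noteq> x'"
    using mate_mem[OF M_perfect] x x'(1) by auto
  show "mate M x' \<noteq> x" by (rule mate_x'_neq_x)
  show "mate M x \<noteq> x'"
    using mate_x'_neq_x e mate_eq[OF M_perfect] by (metis insert_commute)
  show "mate M x' \<noteq> mate M x"
    using e perfect_matching_mate_unique[OF M_perfect] x'(2) by (metis insert_commute)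
qed

lemma shortcut_perfect: "shortcut x x' M \<in> perfect_matchings_on C'"
proof -
  let ?y = "mate M x'" and ?z = "mate M x"
  have removed: "M - {{x',?y}} \<in> perfect_matchings_on (C - {x',?y})"
    using perfect_matching_remove_edge[OF M_perfect mates(2)] .
  have "{x,?z} \<in> M - {{x',?y}}" using mates x'(2) by (auto simp: doubleton_eq_iff)
  note removed2 = perfect_matching_remove_edge[OF removed this]
  have "?y \<notin> C - {x',?y} - {x,?z}" "?z \<notin> C - {x',?y} - {x,?z}" by auto
  note inserted = perfect_matching_insert_edge[OF removed2 this mates(9)]
  have "insert ?y (insert ?z (C - {x',?y} - {x,?z})) = C'"
    unfolding C'_def using mates by auto
  moreover have "M - {{x',?y}} - {{x,?z}} = M - {{x',?y}, {x,?z}}" by auto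
  ultimately show ?thesis using inserted unfolding shortcut_def by simp
qed

lemma shortcut_connected:
  assumes u: "u \<in> C'" and v: "v \<in> C'"
  shows "(u,v) \<in> (edge_rel (M0' \<union> shortcut x x' M))\<^sup>*"
proof -
  let ?y = "mate M x'" and ?z = "mate M x" and ?R' = "edge_rel (M0' \<union> shortcut x x' M)"
  define \<pi> where "\<pi> v = (if v \<in> {x,x'} then ?y else v)" for v
  have M0_mates: "mate M0 x = x'" "mate M0 x' = x"
    using x'_def mate_eq[OF M0] M0_edge by (auto simp: insert_commute)
  have leave: "(\<pi> a, \<pi> b) \<in> ?R'\<^sup>*" if ab: "{a,b} \<in> M0 \<union> M" "a \<in> {x,x'}" "b \<notin> {x,x'}" for a b
  proof -
    have "b = mate M0 a \<or> b = mate M a" using ab(1) mate_eq[OF M0] mate_eq[OF M_perfect] by blast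
    then have "b = mate M a" using ab(2,3) M0_mates by auto
    then consider "a = x" "b = ?z" | "a = x'" "b = ?y" using ab(2) by auto
    then show ?thesis
    proof cases
      case 1
      then have "(\<pi> a, \<pi> b) \<in> ?R'" using ab(3) unfolding \<pi>_def edge_rel_def shortcut_def by auto
      then show ?thesis by blast
    qed (simp add: \<pi>_def)
  qed
  have \<pi>_edge: "(\<pi> a, \<pi> b) \<in> ?R'\<^sup>*" if "(a,b) \<in> edge_rel (M0 \<union> M)" for a b
  proof -
    have ab: "{a,b} \<in> M0 \<union> M" "{b,a} \<in> M0 \<union> M"
      using that unfolding edge_rel_def by (auto simp: insert_commute)
    consider "a \<in> {x,x'}" "b \<in> {x,x'}" | "a \<in> {x,x'}" "b \<notin> {x,x'}"
      | "a \<notin> {x,x'}" "b \<in> {x,x'}" | "a \<notin> {x,x'}" "b \<notin> {x,x'}" by argo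
    then show ?thesis
    proof cases
      case 1
      then show ?thesis by (simp add: \<pi>_def)
    next
      case 2
      then show ?thesis using leave[OF ab(1)] by simp
    next
      case 3
      then show ?thesis using edge_rel_rtrancl_sym[OF leave[OF ab(2)]] by simp
    next
      case 4
      then have "x \<notin> {a,b}" "x' \<notin> {a,b}" by auto
      then have "{a,b} \<noteq> {x,x'}" "{a,b} \<noteq> {x',?y}" "{a,b} \<noteq> {x,?z}" by (metis insertI1)+
      then have "{a,b} \<in> M0' \<union> shortcut x x' M"
        using ab(1) unfolding M0'_def shortcut_def by blast
      then have "(a,b) \<in> ?R'" unfolding edge_rel_def by simp
      then show ?thesis using 4 by (simp add: \<pi>_def r_into_rtrancl)
    qed
  qed
  have "u \<in> C" "v \<in> C" using u v unfolding C'_def by auto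
  then have "(u,v) \<in> (edge_rel (M0 \<union> M))\<^sup>*" by (rule connected)
  then have "(\<pi> u, \<pi> v) \<in> ?R'\<^sup>*" by (rule rtrancl_map) (rule \<pi>_edge)
  moreover have "\<pi> u = u" "\<pi> v = v" using u v unfolding \<pi>_def C'_def by auto
  ultimately show ?thesis by simp
qed

lemma shortcut_connecting: "shortcut x x' M \<in> connecting_matchings M0' C'"
  unfolding connecting_matchings_def using shortcut_perfect shortcut_connected by blast

lemma shortcut_inverse:
  defines "N \<equiv> shortcut x x' M" and "y \<equiv> mate M x'"
  shows "M = insert {x',y} (insert {x, mate N y} (N - {{y, mate N y}}))"
proof -
  let ?z = "mate M x"
  have yz: "{y, ?z} \<in> N" unfolding N_def y_def shortcut_def by simp
  have "mate N y = ?z" unfolding N_def using mate_eq[OF shortcut_perfect yz[unfolded N_def]] .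
  moreover have "{y, ?z} \<notin> M"
  proof
    assume "{y, ?z} \<in> M"
    moreover have "{y, x'} \<in> M" using mates(2) unfolding y_def by (simp add: insert_commute)
    ultimately show False using perfect_matching_mate_unique[OF M_perfect] mates(8) by blast
  qed
  then have "N - {{y, ?z}} = M - {{x',y}, {x,?z}}" unfolding N_def y_def shortcut_def by auto
  ultimately show ?thesis using mates(1,2) unfolding y_def by auto
qed

end

lemma shortcut_inj: "inj_on (\<lambda>M. (shortcut x x' M, mate M x')) (connecting_matchings M0 C)"
proof (rule inj_onI)
  fix M N assume "M \<in> connecting_matchings M0 C" "N \<in> connecting_matchings M0 C"
    and "(shortcut x x' M, mate M x') = (shortcut x x' N, mate N x')"
  then show "M = N" using shortcut_inverse by (metis prod.inject)
qed

end

fun cycle_count :: "nat \<Rightarrow> nat" where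
  "cycle_count 0 = 1" | "cycle_count (Suc 0) = 1"
| "cycle_count (Suc (Suc b)) = 2*(Suc b)*cycle_count (Suc b)"

lemma card_connecting_matchings_le:
  "finite C \<Longrightarrow> M0 \<in> perfect_matchings_on C \<Longrightarrow> card C = 2*a
    \<Longrightarrow> card (connecting_matchings M0 C) \<le> cycle_count a"
proof (induction a arbitrary: C M0 rule: cycle_count.induct)
  case (3 b)
  then obtain x where "x \<in> C" by fastforce
  then interpret shortcut_setting C M0 x using 3 by unfold_locales auto
  have card_C': "card C' = 2 * Suc b" using card_C' 3 by simp
  let ?\<phi> = "\<lambda>M. (shortcut x x' M, mate M x')"
  have "card (connecting_matchings M0 C) = card (?\<phi> ` connecting_matchings M0 C)"
    using card_image[OF shortcut_inj] by simp
  also have "\<dots> \<le> card (connecting_matchings M0' C' \<times> C')"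
  proof (rule card_mono)
    show "finite (connecting_matchings M0' C' \<times> C')"
      using finite_subset[OF connecting_matchings_subset finite_perfect_matchings_on[OF finite_C']]
        finite_C' by simp
    show "?\<phi> ` connecting_matchings M0 C \<subseteq> connecting_matchings M0' C' \<times> C'"
      using shortcut_connecting mates(4,6,7) unfolding C'_def by auto
  qed
  also have "\<dots> \<le> cycle_count (Suc b) * card C'"
    using "3.IH"[OF finite_C' M0' card_C'] by (simp add: card_cartesian_product)
  also have "\<dots> = cycle_count (Suc (Suc b))" using card_C' by simp
  finally show ?case .
next
  case (1 C M0)
  have "card (connecting_matchings M0 C) \<le> card (perfect_matchings_on C)"
    using card_mono[OF finite_perfect_matchings_on[OF 1(1)] connecting_matchings_subset] .
  then show ?case using card_perfect_matchings_on[OF 1(1,3)] by simp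
next
  case (2 C M0)
  have "card (connecting_matchings M0 C) \<le> card (perfect_matchings_on C)"
    using card_mono[OF finite_perfect_matchings_on[OF 2(1)] connecting_matchings_subset] .
  then show ?case using card_perfect_matchings_on[OF 2(1,3)] by simp
qed

lemma card_Union_matching_subset:
  assumes M: "M \<in> perfect_matchings_on V" and F: "F \<subseteq> M"
  shows "card (\<Union>F) = 2 * card F"
proof -
  have card_e: "card e = 2" if "e \<in> F" for e
    using perfect_matching_edge[OF M] F that by fastforce
  have "e \<inter> f = {}" if "e \<in> F" "f \<in> F" "e \<noteq> f" for e f
    using perfect_matching_edge_unique[OF M, of _ e f] F that by blast
  then have "pairwise disjnt F" unfolding pairwise_def disjnt_def by blast
  moreover have "finite e" if "e \<in> F" for e using card_e[OF that] card.infinite by fastforce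
  ultimately have "card (\<Union>F) = sum card F" using card_Union_disjoint by blast
  then show ?thesis using card_e by simp
qed

lemma Union_perfect_matching: "M \<in> perfect_matchings_on V \<Longrightarrow> \<Union>M = V"
  using perfect_matching_edge_subset perfect_matching_covers
  by (metis UnionI Union_least subsetI subset_antisym)

lemma card_perfect_matching: "M \<in> perfect_matchings_on V \<Longrightarrow> card V = 2 * card M"
  using card_Union_matching_subset[of M V M] Union_perfect_matching[of M V] by simp

definition edge_unions :: "'a set set \<Rightarrow> 'a set \<Rightarrow> 'a set set" where
  "edge_unions M V = {C. C \<subseteq> V \<and> (\<forall>e\<in>M. e \<subseteq> C \<or> e \<subseteq> V - C)}"

lemma Union_restrict_edges:
  assumes M: "M \<in> perfect_matchings_on V" and C: "C \<in> edge_unions M V"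
  shows "\<Union>(restrict_edges M C) = C"
proof
  show "\<Union>(restrict_edges M C) \<subseteq> C" unfolding restrict_edges_def by auto
  show "C \<subseteq> \<Union>(restrict_edges M C)"
  proof
    fix v assume v: "v \<in> C"
    then obtain e where e: "e \<in> M" "v \<in> e"
      using perfect_matching_covers[OF M, of v] C unfolding edge_unions_def by auto
    then have "e \<subseteq> C" using C v unfolding edge_unions_def by auto
    then show "v \<in> \<Union>(restrict_edges M C)" using e unfolding restrict_edges_def by auto
  qed
qed

lemma card_edge_union:
  assumes M: "M \<in> perfect_matchings_on V" and C: "C \<in> edge_unions M V"
  shows "card C = 2 * card (restrict_edges M C)"
  using card_Union_matching_subset[OF M] Union_restrict_edges[OF M C]
  unfolding restrict_edges_def by (metis (no_types, lifting) mem_Collect_eq subsetI)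

lemma card_edge_unions_le:
  assumes M: "M \<in> perfect_matchings_on V" and fin: "finite V" and card_V: "card V = 2*m"
  shows "card {C \<in> edge_unions M V. card C = 2*a} \<le> m choose a"
proof -
  let ?A = "{C \<in> edge_unions M V. card C = 2*a}" and ?B = "{F. F \<subseteq> M \<and> card F = a}"
  have finM: "finite M" using finite_perfect_matching[OF fin M] .
  have "inj_on (restrict_edges M) ?A"
    using Union_restrict_edges[OF M] by (intro inj_onI) (metis (no_types, lifting) mem_Collect_eq)
  then have "card ?A = card (restrict_edges M ` ?A)" by (simp add: card_image)
  also have "\<dots> \<le> card ?B"
  proof (rule card_mono)
    show "finite ?B" using finM by simp
    show "restrict_edges M ` ?A \<subseteq> ?B"
      using card_edge_union[OF M] unfolding restrict_edges_def by auto
  qed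
  also have "\<dots> = m choose a" using n_subsets[OF finM] card_perfect_matching[OF M] card_V by simp
  finally show ?thesis .
qed

lemma component_count_ratio_aux:
  assumes "1 \<le> a" "a \<le> m"
  shows "real a * real (m choose a) * real (cycle_count a) * real (num_matchings (m - a))
           \<le> real (num_matchings m) / 2 * (1 + 1 / (2 * real (m - a) + 1)) ^ a"
  using assms
proof (induction a rule: dec_induct)
  case base
  obtain k where m: "m = Suc k" using assms(2) base by (cases m) auto
  have "real m * real (num_matchings k) = real (num_matchings m) / 2 * (1 + 1 / (2 * real k + 1))"
    unfolding m by (simp add: field_simps)
  then show ?case using m by simp
next
  case (step a)
  have a: "1 \<le> a" "a < m" using step by simp_all
  obtain j where j: "m - a = Suc j" using a(2) by (metis Suc_diff_Suc)
  then have j': "m - Suc a = j" by simp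
  let ?x = "1 + 1 / (2 * real j + 1)"
  define Q where "Q = real a * real (m choose a) * real (cycle_count a) * real (num_matchings (m - a))"
  have cycle: "cycle_count (Suc a) = 2 * a * cycle_count a" using a(1) by (cases a) auto
  have binom: "real (Suc a) * real (m choose Suc a) = real (m - a) * real (m choose a)"
    using binomial_absorption[of a m] binomial_absorb_comp[of m a] by (metis of_nat_mult)
  have "real (Suc a) * real (m choose Suc a) * real (cycle_count (Suc a)) * real (num_matchings (m - Suc a))
      = real (Suc j) * real (m choose a) * (2 * real a * real (cycle_count a)) * real (num_matchings j)"
    using binom cycle j j' by simp
  also have "\<dots> = Q * ?x"
    unfolding Q_def j by (simp add: field_simps)
  also have "\<dots> \<le> real (num_matchings m) / 2 * (1 + 1 / (2 * real (m - a) + 1)) ^ a * ?x"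
    using step.IH a unfolding Q_def by (intro mult_right_mono) auto
  also have "\<dots> \<le> real (num_matchings m) / 2 * ?x ^ a * ?x"
    unfolding j by (intro mult_right_mono mult_left_mono power_mono) (auto simp: frac_le)
  also have "\<dots> = real (num_matchings m) / 2 * (1 + 1 / (2 * real (m - Suc a) + 1)) ^ Suc a"
    using j' by simp
  finally show ?case .
qed

text \<open>
  Divided by num_matchings m, the left-hand side bounds the expected number of components on 2a
  vertices: a choice of a edges of M0, an M1 closing them into one cycle, and an arbitrary M1
  on the rest.
\<close>
lemma component_count_ratio_le:
  assumes a: "1 \<le> a" "2 * a \<le> m"
  shows "real (m choose a) * real (cycle_count a) * real (num_matchings (m - a))
           \<le> 2 / real a * real (num_matchings m)"
proof -
  define x where "x = 1 / (2 * real (m - a) + 1)"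
  have x: "0 \<le> x" "real a * x \<le> 1" unfolding x_def using a by (auto simp: field_simps)
  have "(1 + x) ^ a \<le> exp x ^ a" using x by (intro power_mono) (auto simp: exp_ge_add_one_self)
  also have "\<dots> = exp (real a * x)" by (simp add: exp_of_nat_mult)
  also have "\<dots> \<le> exp 1" using x by simp
  also have "\<dots> \<le> 4" using exp_le by simp
  finally have "real (num_matchings m) / 2 * (1 + x) ^ a \<le> real (num_matchings m) / 2 * 4"
    by (intro mult_left_mono) auto
  then have "real a * (real (m choose a) * real (cycle_count a) * real (num_matchings (m - a)))
      \<le> real (num_matchings m) / 2 * 4"
    using component_count_ratio_aux[of a m] a unfolding x_def by (simp add: mult.assoc)
  then show ?thesis using a(1) by (simp add: field_simps)
qed

definition distinct_tuples :: "nat \<Rightarrow> 'b set \<Rightarrow> 'b list set" where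
  "distinct_tuples r S = {cs. distinct cs \<and> length cs = r \<and> set cs \<subseteq> S}"

lemma distinct_tuples_0: "distinct_tuples 0 S = {[]}" unfolding distinct_tuples_def by auto

lemma finite_distinct_tuples: "finite S \<Longrightarrow> finite (distinct_tuples r S)"
  by (rule finite_subset[of _ "{xs. set xs \<subseteq> S \<and> length xs = r}"])
    (auto simp: distinct_tuples_def finite_lists_length_eq)

lemma distinct_tuples_Suc:
  "distinct_tuples (Suc r) S = (\<lambda>(c,cs). c#cs) ` (SIGMA c:S. distinct_tuples r (S - {c}))"
proof
  show "distinct_tuples (Suc r) S \<subseteq> (\<lambda>(c,cs). c#cs) ` (SIGMA c:S. distinct_tuples r (S - {c}))"
  proof
    fix xs assume xs: "xs \<in> distinct_tuples (Suc r) S"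
    then obtain c cs where "xs = c # cs" unfolding distinct_tuples_def by (cases xs) auto
    then show "xs \<in> (\<lambda>(c,cs). c#cs) ` (SIGMA c:S. distinct_tuples r (S - {c}))"
      using xs unfolding distinct_tuples_def by force
  qed
  show "(\<lambda>(c,cs). c#cs) ` (SIGMA c:S. distinct_tuples r (S - {c})) \<subseteq> distinct_tuples (Suc r) S"
    unfolding distinct_tuples_def by auto
qed

lemma sum_distinct_tuples_Suc:
  assumes "finite S"
  shows "(\<Sum>cs\<in>distinct_tuples (Suc r) S. f cs)
       = (\<Sum>c\<in>S. \<Sum>cs\<in>distinct_tuples r (S - {c}). f (c # cs))"
proof -
  let ?cons = "\<lambda>(c,cs). c#cs" and ?T = "SIGMA c:S. distinct_tuples r (S - {c})"
  have inj: "inj_on ?cons ?T" by (rule inj_onI) auto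
  have fin: "\<And>c. finite (distinct_tuples r (S - {c}))" using finite_distinct_tuples assms by auto
  have "(\<Sum>cs\<in>distinct_tuples (Suc r) S. f cs) = (\<Sum>p\<in>?T. f (?cons p))"
    unfolding distinct_tuples_Suc using sum.reindex[OF inj] by simp
  also have "\<dots> = (\<Sum>c\<in>S. \<Sum>cs\<in>distinct_tuples r (S - {c}). f (c # cs))"
    using sum.Sigma[OF assms, of "\<lambda>c. distinct_tuples r (S - {c})", symmetric] fin
    by (simp add: case_prod_beta)
  finally show ?thesis .
qed

lemma power_le_sum_distinct_tuples:
  assumes "finite F" "\<forall>c\<in>F. 0 \<le> w c \<and> w c \<le> H" "0 \<le> H"
  shows "(max 0 (sum w F - real r * H)) ^ r \<le> (\<Sum>cs\<in>distinct_tuples r F. prod_list (map w cs))"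
  using assms
proof (induction r arbitrary: F)
  case 0
  then show ?case by (simp add: distinct_tuples_0)
next
  case (Suc r)
  define D where "D = max 0 (sum w F - real (Suc r) * H)"
  have D0: "0 \<le> D" unfolding D_def by simp
  have S0: "0 \<le> sum w F" using Suc.prems(2) by (simp add: sum_nonneg)
  have DS: "D \<le> sum w F" unfolding D_def using S0 Suc.prems(3) by auto
  have inner: "D ^ r \<le> (\<Sum>cs\<in>distinct_tuples r (F - {c}). prod_list (map w cs))" if c: "c \<in> F" for c
  proof -
    have "sum w (F - {c}) = sum w F - w c" using sum_diff1[of F w c] Suc.prems(1) c by simp
    then have "D \<le> max 0 (sum w (F - {c}) - real r * H)"
      unfolding D_def using Suc.prems(2) c by (auto simp: algebra_simps)
    then have "D ^ r \<le> (max 0 (sum w (F - {c}) - real r * H)) ^ r"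
      using D0 by (intro power_mono) auto
    also have "\<dots> \<le> (\<Sum>cs\<in>distinct_tuples r (F - {c}). prod_list (map w cs))"
      using Suc.IH[of "F - {c}"] Suc.prems by auto
    finally show ?thesis .
  qed
  have "D ^ Suc r = D * D ^ r" by simp
  also have "\<dots> \<le> sum w F * D ^ r" using DS D0 by (intro mult_right_mono) auto
  also have "\<dots> = (\<Sum>c\<in>F. w c * D ^ r)" by (simp add: sum_distrib_right)
  also have "\<dots> \<le> (\<Sum>c\<in>F. w c * (\<Sum>cs\<in>distinct_tuples r (F - {c}). prod_list (map w cs)))"
    using inner Suc.prems(2) by (intro sum_mono mult_left_mono) auto
  also have "\<dots> = (\<Sum>c\<in>F. \<Sum>cs\<in>distinct_tuples r (F - {c}). prod_list (map w (c # cs)))"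
    by (simp add: sum_distrib_left)
  also have "\<dots> = (\<Sum>cs\<in>distinct_tuples (Suc r) F. prod_list (map w cs))"
    using sum_distinct_tuples_Suc[OF Suc.prems(1), of "\<lambda>cs. prod_list (map w cs)" r] by simp
  finally show ?case unfolding D_def .
qed

definition small_components ::
    "nat \<Rightarrow> 'a set \<Rightarrow> 'a set set \<Rightarrow> 'a set set \<Rightarrow> 'a set set" where
  "small_components s V M0 M1 = {C \<in> components_on V (M0 \<union> M1). card C \<le> s}"

definition component_moment ::
    "nat \<Rightarrow> nat \<Rightarrow> (nat \<Rightarrow> real) \<Rightarrow> 'a set \<Rightarrow> 'a set set \<Rightarrow> 'a set set \<Rightarrow> real" where
  "component_moment r s h V M0 M1 =
     (\<Sum>cs\<in>distinct_tuples r (small_components s V M0 M1).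
        prod_list (map (\<lambda>C. h (card C)) cs))"

lemma component_moment_nonneg: "(\<And>k. 0 \<le> h k) \<Longrightarrow> 0 \<le> component_moment r s h V M0 M1"
  unfolding component_moment_def by (intro sum_nonneg prod_list_nonneg) auto

lemma finite_small_components:
  assumes "finite V" "M0 \<in> perfect_matchings_on V" "M1 \<in> perfect_matchings_on V"
  shows "finite (small_components s V M0 M1)"
proof -
  have "\<forall>e\<in>M0 \<union> M1. e \<subseteq> V" using assms(2,3) perfect_matching_edge_subset by blast
  then show ?thesis unfolding small_components_def using finite_components_on[OF _ assms(1)] by simp
qed

lemma component_moment_Suc:
  assumes fin: "finite V"
    and M0: "M0 \<in> perfect_matchings_on V" and M1: "M1 \<in> perfect_matchings_on V"
  shows "component_moment (Suc r) s h V M0 M1 = (\<Sum>C\<in>small_components s V M0 M1. h (card C) *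
            component_moment r s h (V - C) (restrict_edges M0 (V - C)) (restrict_edges M1 (V - C)))"
proof -
  have rest: "small_components s V M0 M1 - {C}
      = small_components s (V - C) (restrict_edges M0 (V - C)) (restrict_edges M1 (V - C))"
    if "C \<in> small_components s V M0 M1" for C
  proof -
    interpret matching_component V M0 M1 C
      using fin M0 M1 that unfolding small_components_def by unfold_locales auto
    show ?thesis unfolding small_components_def using components_on_remove_component by auto
  qed
  let ?S = "small_components s V M0 M1" and ?w = "\<lambda>cs. prod_list (map (\<lambda>C. h (card C)) cs)"
  have "component_moment (Suc r) s h V M0 M1
      = (\<Sum>C\<in>?S. \<Sum>cs\<in>distinct_tuples r (?S - {C}). ?w (C # cs))"
    unfolding component_moment_def
    by (rule sum_distinct_tuples_Suc[OF finite_small_components[OF fin M0 M1]])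
  also have "\<dots> = (\<Sum>C\<in>?S. h (card C) * (\<Sum>cs\<in>distinct_tuples r (?S - {C}). ?w cs))"
    by (simp add: sum_distrib_left)
  finally show ?thesis unfolding component_moment_def using rest by simp
qed

lemma sum_matchings_with_component_le:
  assumes fin: "finite V" and M0: "M0 \<in> perfect_matchings_on V" and C: "C \<in> edge_unions M0 V"
    and card_C: "card C = 2 * a" and f_nonneg: "\<And>B. 0 \<le> (f B :: real)"
  shows "(\<Sum>M1\<in>{M1 \<in> perfect_matchings_on V. C \<in> components_on V (M0 \<union> M1)}.
            f (restrict_edges M1 (V - C)))
         \<le> real (cycle_count a) * (\<Sum>B\<in>perfect_matchings_on (V - C). f B)"
proof -
  let ?P = "{M1 \<in> perfect_matchings_on V. C \<in> components_on V (M0 \<union> M1)}"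
  let ?split = "\<lambda>M1. (restrict_edges M1 C, restrict_edges M1 (V - C))"
  let ?K = "connecting_matchings (restrict_edges M0 C) C"
  have inj: "inj_on ?split ?P"
  proof (rule inj_onI)
    fix M N assume M: "M \<in> ?P" and N: "N \<in> ?P" and eq: "?split M = ?split N"
    interpret M: matching_component V M0 M C using fin M0 M by unfold_locales auto
    interpret N: matching_component V M0 N C using fin M0 N by unfold_locales auto
    show "M = N" using M.M1_eq_Un_restrict N.M1_eq_Un_restrict eq by auto
  qed
  have img: "?split ` ?P \<subseteq> ?K \<times> perfect_matchings_on (V - C)"
  proof
    fix p assume "p \<in> ?split ` ?P"
    then obtain M where M: "M \<in> ?P" and p: "p = ?split M" by blast
    interpret matching_component V M0 M C using fin M0 M by unfold_locales auto
    show "p \<in> ?K \<times> perfect_matchings_on (V - C)"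
      using restrict_M1_connecting perfect_matching_restrict_compl[OF M1 M1_splits] p by simp
  qed
  have CV: "C \<subseteq> V" and splits: "\<forall>e\<in>M0. e \<subseteq> C \<or> e \<subseteq> V - C"
    using C unfolding edge_unions_def by auto
  have finC: "finite C" using fin CV finite_subset by blast
  have fin2: "finite (?K \<times> perfect_matchings_on (V - C))"
    using finite_subset[OF connecting_matchings_subset finite_perfect_matchings_on[OF finC]]
      finite_perfect_matchings_on[of "V - C"] fin by simp
  have "(\<Sum>M1\<in>?P. f (restrict_edges M1 (V - C))) = (\<Sum>p\<in>?split ` ?P. f (snd p))"
    using sum.reindex[OF inj, of "\<lambda>p. f (snd p)"] by simp
  also have "\<dots> \<le> (\<Sum>p\<in>?K \<times> perfect_matchings_on (V - C). f (snd p))"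
    using sum_mono2[OF fin2 img, of "\<lambda>p. f (snd p)"] f_nonneg by auto
  also have "\<dots> = (\<Sum>(A,B)\<in>?K \<times> perfect_matchings_on (V - C). f B)"
    by (simp add: case_prod_beta)
  also have "\<dots> = (\<Sum>A\<in>?K. \<Sum>B\<in>perfect_matchings_on (V - C). f B)"
    by (rule sum.cartesian_product[symmetric])
  also have "\<dots> = real (card ?K) * (\<Sum>B\<in>perfect_matchings_on (V - C). f B)" by simp
  also have "\<dots> \<le> real (cycle_count a) * (\<Sum>B\<in>perfect_matchings_on (V - C). f B)"
  proof -
    have "restrict_edges M0 C \<in> perfect_matchings_on C"
      using perfect_matching_restrict[OF M0 CV splits] .
    then have "card ?K \<le> cycle_count a" using card_connecting_matchings_le[OF finC _ card_C] by blast
    then show ?thesis using f_nonneg by (intro mult_right_mono sum_nonneg) auto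
  qed
  finally show ?thesis .
qed

definition moment_factor :: "nat \<Rightarrow> (nat \<Rightarrow> real) \<Rightarrow> real" where
  "moment_factor s h = (\<Sum>a\<in>{1..s div 2}. 2 * h (2*a) / real a)"

lemma moment_factor_nonneg: "(\<And>k. 0 \<le> h k) \<Longrightarrow> 0 \<le> moment_factor s h"
  unfolding moment_factor_def by (intro sum_nonneg) auto

lemma sum_edge_unions_le:
  fixes s :: nat
  assumes M0: "M0 \<in> perfect_matchings_on V" and fin: "finite V" and card_V: "card V = 2*m"
    and \<phi>_nonneg: "\<And>a. 0 \<le> (\<phi> a :: real)"
  defines "U \<equiv> {C \<in> edge_unions M0 V. C \<noteq> {} \<and> card C \<le> s}"
  shows "(\<Sum>C\<in>U. \<phi> (card C div 2)) \<le> (\<Sum>a\<in>{1..s div 2}. real (m choose a) * \<phi> a)"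
proof -
  have finU: "finite U" unfolding U_def edge_unions_def using fin by simp
  have even: "card C = 2 * (card C div 2)" "1 \<le> card C div 2" if "C \<in> U" for C
  proof -
    have "C \<subseteq> V" "C \<noteq> {}" using that unfolding U_def edge_unions_def by auto
    then have "card C > 0" using fin finite_subset by (simp add: card_gt_0_iff)
    then show "card C = 2 * (card C div 2)" "1 \<le> card C div 2"
      using card_edge_union[OF M0] that unfolding U_def by auto
  qed
  have "(\<Sum>C\<in>U. \<phi> (card C div 2))
      = (\<Sum>a\<in>(\<lambda>C. card C div 2) ` U. \<Sum>C\<in>{C \<in> U. card C div 2 = a}. \<phi> (card C div 2))"
    by (rule sum.image_gen[OF finU])
  also have "\<dots> = (\<Sum>a\<in>(\<lambda>C. card C div 2) ` U. real (card {C \<in> U. card C div 2 = a}) * \<phi> a)"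
    by (intro sum.cong refl) auto
  also have "\<dots> \<le> (\<Sum>a\<in>{1..s div 2}. real (card {C \<in> U. card C div 2 = a}) * \<phi> a)"
  proof (rule sum_mono2)
    show "(\<lambda>C. card C div 2) ` U \<subseteq> {1..s div 2}"
    proof
      fix a assume "a \<in> (\<lambda>C. card C div 2) ` U"
      then obtain C where C: "C \<in> U" "a = card C div 2" by blast
      then have "card C \<le> s" unfolding U_def by simp
      then show "a \<in> {1..s div 2}" using even(2)[OF C(1)] C(2) by (simp add: div_le_mono)
    qed
  qed (use \<phi>_nonneg in auto)
  also have "\<dots> \<le> (\<Sum>a\<in>{1..s div 2}. real (m choose a) * \<phi> a)"
  proof (intro sum_mono mult_right_mono)
    fix a
    have "{C \<in> U. card C div 2 = a} \<subseteq> {C \<in> edge_unions M0 V. card C = 2*a}"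
      using even unfolding U_def by auto
    moreover have "finite {C \<in> edge_unions M0 V. card C = 2*a}"
      using fin unfolding edge_unions_def by simp
    ultimately have "card {C \<in> U. card C div 2 = a} \<le> card {C \<in> edge_unions M0 V. card C = 2*a}"
      by (intro card_mono)
    then show "real (card {C \<in> U. card C div 2 = a}) \<le> real (m choose a)"
      using card_edge_unions_le[OF M0 fin card_V, of a] by linarith
  qed (use \<phi>_nonneg in auto)
  finally show ?thesis .
qed

lemma sum_small_component_moment_le:
  assumes fin: "finite V" and M0: "M0 \<in> perfect_matchings_on V" and C: "C \<in> edge_unions M0 V"
    and card_C: "card C = 2 * a" and card_C_le: "card C \<le> s" and h_nonneg: "\<And>k. 0 \<le> h k"
    and rest: "(\<Sum>B\<in>perfect_matchings_on (V - C).
                 component_moment r s h (V - C) (restrict_edges M0 (V - C)) B) \<le> X"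
  shows "(\<Sum>M1\<in>{M1 \<in> perfect_matchings_on V. C \<in> small_components s V M0 M1}.
            h (card C) *
            component_moment r s h (V - C) (restrict_edges M0 (V - C)) (restrict_edges M1 (V - C)))
         \<le> h (2*a) * (real (cycle_count a) * X)"
proof -
  let ?f = "component_moment r s h (V - C) (restrict_edges M0 (V - C))"
  have "{M1 \<in> perfect_matchings_on V. C \<in> small_components s V M0 M1}
      = {M1 \<in> perfect_matchings_on V. C \<in> components_on V (M0 \<union> M1)}"
    using card_C_le unfolding small_components_def by auto
  then have "(\<Sum>M1\<in>{M1 \<in> perfect_matchings_on V. C \<in> small_components s V M0 M1}.
        h (card C) * ?f (restrict_edges M1 (V - C)))
      = h (card C) * (\<Sum>M1\<in>{M1 \<in> perfect_matchings_on V. C \<in> components_on V (M0 \<union> M1)}.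
        ?f (restrict_edges M1 (V - C)))"
    by (simp add: sum_distrib_left)
  also have "\<dots> \<le> h (card C) * (real (cycle_count a) * (\<Sum>B\<in>perfect_matchings_on (V - C). ?f B))"
    using h_nonneg
    by (intro mult_left_mono sum_matchings_with_component_le[OF fin M0 C card_C]
        component_moment_nonneg h_nonneg)
  also have "\<dots> \<le> h (2*a) * (real (cycle_count a) * X)"
    unfolding card_C using rest h_nonneg by (intro mult_left_mono) auto
  finally show ?thesis .
qed

lemma sum_component_weights_le:
  assumes h_nonneg: "\<And>k. 0 \<le> h k" and c: "0 \<le> c" and s: "s \<le> m"
  shows "(\<Sum>a\<in>{1..s div 2}. real (m choose a) *
            (h (2*a) * (real (cycle_count a) * (real (num_matchings (m - a)) * c))))
         \<le> moment_factor s h * (real (num_matchings m) * c)"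
proof -
  have "real (m choose a) * (h (2*a) * (real (cycle_count a) * (real (num_matchings (m - a)) * c)))
      \<le> 2 * h (2*a) / real a * (real (num_matchings m) * c)" if a: "a \<in> {1..s div 2}" for a
  proof -
    have "real (m choose a) * real (cycle_count a) * real (num_matchings (m - a))
        \<le> 2 / real a * real (num_matchings m)"
      using component_count_ratio_le a s by auto
    then have "h (2*a) * (real (m choose a) * real (cycle_count a) * real (num_matchings (m - a))) * c
        \<le> h (2*a) * (2 / real a * real (num_matchings m)) * c"
      using h_nonneg c by (intro mult_right_mono mult_left_mono) auto
    then show ?thesis by (simp add: algebra_simps)
  qed
  then have "(\<Sum>a\<in>{1..s div 2}. real (m choose a) *
            (h (2*a) * (real (cycle_count a) * (real (num_matchings (m - a)) * c))))
      \<le> (\<Sum>a\<in>{1..s div 2}. 2 * h (2*a) / real a * (real (num_matchings m) * c))"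
    by (rule sum_mono)
  also have "\<dots> = moment_factor s h * (real (num_matchings m) * c)"
    unfolding moment_factor_def by (rule sum_distrib_right[symmetric])
  finally show ?thesis .
qed

lemma sum_component_moment_le:
  assumes h_nonneg: "\<And>k. 0 \<le> h k"
  shows "finite V \<Longrightarrow> M0 \<in> perfect_matchings_on V \<Longrightarrow> card V = 2*m \<Longrightarrow> 2*r*s \<le> card V \<Longrightarrow>
     (\<Sum>M1\<in>perfect_matchings_on V. component_moment r s h V M0 M1)
       \<le> real (num_matchings m) * moment_factor s h ^ r"
proof (induction r arbitrary: V M0 m)
  case 0
  then show ?case
    by (simp add: component_moment_def distinct_tuples_0 card_perfect_matchings_on)
next
  case (Suc r)
  note fin = Suc.prems(1) and M0 = Suc.prems(2) and card_V = Suc.prems(3) and rs = Suc.prems(4)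
  let ?L = "moment_factor s h" and ?P = "perfect_matchings_on V"
  let ?g = "\<lambda>M1 C. h (card C) *
    component_moment r s h (V - C) (restrict_edges M0 (V - C)) (restrict_edges M1 (V - C))"
  define U where "U = {C \<in> edge_unions M0 V. C \<noteq> {} \<and> card C \<le> s}"
  define \<phi> where "\<phi> a = h (2*a) * (real (cycle_count a) * (real (num_matchings (m - a)) * ?L ^ r))"
    for a
  have L_nonneg: "0 \<le> ?L" using moment_factor_nonneg h_nonneg .
  have \<phi>_nonneg: "0 \<le> \<phi> a" for a unfolding \<phi>_def using h_nonneg L_nonneg by simp
  have small_U: "small_components s V M0 M1 \<subseteq> U" if M1: "M1 \<in> ?P" for M1
  proof
    fix C assume "C \<in> small_components s V M0 M1"
    then have C_small: "C \<in> components_on V (M0 \<union> M1)" "card C \<le> s"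
      unfolding small_components_def by auto
    interpret matching_component V M0 M1 C using fin M0 M1 C_small(1) by unfold_locales
    show "C \<in> U"
      unfolding U_def edge_unions_def using C_subset C_nonempty M0_splits C_small(2) by auto
  qed
  have per_component:
    "(\<Sum>M1\<in>{M1 \<in> ?P. C \<in> small_components s V M0 M1}. ?g M1 C) \<le> \<phi> (card C div 2)"
    if C: "C \<in> U" for C
  proof -
    have CV: "C \<subseteq> V" and splits: "\<forall>e\<in>M0. e \<subseteq> C \<or> e \<subseteq> V - C"
      and card_C_le: "card C \<le> s"
      using C unfolding U_def edge_unions_def by auto
    have card_C: "card C = 2 * (card C div 2)"
      using card_edge_union[OF M0] C unfolding U_def by auto
    have "card (V - C) = 2 * (m - card C div 2)" "2 * r * s \<le> card (V - C)"
      using card_V card_C rs card_C_le CV fin by (auto simp: card_Diff_subset finite_subset)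
    then have "(\<Sum>B\<in>perfect_matchings_on (V - C).
          component_moment r s h (V - C) (restrict_edges M0 (V - C)) B)
        \<le> real (num_matchings (m - card C div 2)) * ?L ^ r"
      using Suc.IH[OF _ perfect_matching_restrict_compl[OF M0 splits]] fin by simp
    then show ?thesis
      using sum_small_component_moment_le[OF fin M0 _ card_C card_C_le h_nonneg] C
      unfolding U_def \<phi>_def by simp
  qed
  have "(\<Sum>M1\<in>?P. component_moment (Suc r) s h V M0 M1)
      = (\<Sum>M1\<in>?P. \<Sum>C\<in>{C \<in> U. C \<in> small_components s V M0 M1}. ?g M1 C)"
  proof (rule sum.cong[OF refl])
    fix M1 assume M1: "M1 \<in> ?P"
    then have "{C \<in> U. C \<in> small_components s V M0 M1} = small_components s V M0 M1"
      using small_U by auto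
    then show "component_moment (Suc r) s h V M0 M1
        = (\<Sum>C\<in>{C \<in> U. C \<in> small_components s V M0 M1}. ?g M1 C)"
      using component_moment_Suc[OF fin M0 M1] by simp
  qed
  also have "\<dots> = (\<Sum>C\<in>U. \<Sum>M1\<in>{M1 \<in> ?P. C \<in> small_components s V M0 M1}. ?g M1 C)"
    using fin unfolding U_def edge_unions_def
    by (intro sum.swap_restrict finite_perfect_matchings_on) auto
  also have "\<dots> \<le> (\<Sum>C\<in>U. \<phi> (card C div 2))" using per_component by (rule sum_mono)
  also have "\<dots> \<le> (\<Sum>a\<in>{1..s div 2}. real (m choose a) * \<phi> a)"
    unfolding U_def using sum_edge_unions_le[OF M0 fin card_V \<phi>_nonneg] .
  also have "\<dots> \<le> ?L * (real (num_matchings m) * ?L ^ r)"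
    unfolding \<phi>_def using rs card_V h_nonneg L_nonneg by (intro sum_component_weights_le) auto
  also have "\<dots> = real (num_matchings m) * ?L ^ Suc r" by simp
  finally show ?case .
qed

lemma card_level_set_le_sum:
  assumes "finite X" "\<forall>x\<in>X. 0 \<le> g x" "0 < (t::real)"
  shows "real (card {x\<in>X. t \<le> g x}) * t \<le> (\<Sum>x\<in>X. g x)"
proof -
  have "real (card {x\<in>X. t \<le> g x}) * t = (\<Sum>x\<in>{x\<in>X. t \<le> g x}. t)" by simp
  also have "\<dots> \<le> (\<Sum>x\<in>{x\<in>X. t \<le> g x}. g x)" by (rule sum_mono) auto
  also have "\<dots> \<le> (\<Sum>x\<in>X. g x)" using assms by (intro sum_mono2) auto
  finally show ?thesis .
qed

lemma card_power_level_set_le: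
  assumes "finite X" "\<forall>x\<in>X. 0 \<le> g x" "(\<Sum>x\<in>X. g x) \<le> N * K ^ r" "0 < (T::real)"
  shows "real (card {x\<in>X. T ^ r \<le> g x}) \<le> (K / T) ^ r * N"
proof -
  have "real (card {x\<in>X. T ^ r \<le> g x}) * T ^ r \<le> N * K ^ r"
    using card_level_set_le_sum[of X g "T ^ r"] assms by fastforce
  then show ?thesis using assms(4) by (simp add: field_simps power_divide)
qed

lemma sum_inverse_le_ln: "1 \<le> N \<Longrightarrow> (\<Sum>a\<in>{1..N}. 1 / real a) \<le> 1 + ln (real N)"
proof (induction N rule: dec_induct)
  case base then show ?case by simp
next
  case (step N)
  have N0: "0 < real N" using step by simp
  have "ln (real N / real (Suc N)) \<le> real N / real (Suc N) - 1"
    using ln_le_minus_one[of "real N / real (Suc N)"] N0 by simp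
  also have "\<dots> = - (1 / real (Suc N))" by (simp add: field_simps)
  finally have "1 / real (Suc N) \<le> ln (real (Suc N)) - ln (real N)"
    using N0 by (simp add: ln_div)
  moreover have "(\<Sum>a\<in>{1..Suc N}. 1 / real a) = (\<Sum>a\<in>{1..N}. 1 / real a) + 1 / real (Suc N)"
    using step by simp
  ultimately show ?case using step by linarith
qed

lemma moment_factor_one_le:
  assumes n: "1 \<le> n" and s: "s div 2 \<le> n"
  shows "moment_factor s (\<lambda>_. 1) \<le> 2 * (1 + ln (real n))"
proof -
  have "moment_factor s (\<lambda>_. 1) = 2 * (\<Sum>a\<in>{1..s div 2}. 1 / real a)"
    unfolding moment_factor_def by (simp add: sum_distrib_left)
  also have "\<dots> \<le> 2 * (1 + ln (real n))"
  proof (cases "1 \<le> s div 2")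
    case True
    have "(\<Sum>a\<in>{1..s div 2}. 1 / real a) \<le> 1 + ln (real (s div 2))"
      using sum_inverse_le_ln[OF True] .
    also have "\<dots> \<le> 1 + ln (real n)" using True s by simp
    finally show ?thesis by simp
  next
    case False
    then have "{1..s div 2} = {}" by auto
    moreover have "0 \<le> ln (real n)" using n by simp
    ultimately show ?thesis by simp
  qed
  finally show ?thesis .
qed

lemma moment_factor_size_le: "moment_factor s (\<lambda>k. real k) \<le> 2 * real s"
proof -
  have "moment_factor s (\<lambda>k. real k) = (\<Sum>a\<in>{1..s div 2}. 4)"
    unfolding moment_factor_def by (intro sum.cong) auto
  also have "\<dots> = 4 * real (s div 2)" by simp
  also have "\<dots> \<le> 2 * real s" by linarith
  finally show ?thesis .
qed

lemma card_large_components_less: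
  assumes fin: "finite V" and edges: "\<forall>e\<in>E. e \<subseteq> V" and r: "1 \<le> r"
  shows "real (card {C \<in> components_on V E. card V div (2*r) < card C}) < 2 * real r"
proof -
  define s where "s = card V div (2*r)"
  define L where "L = {C \<in> components_on V E. s < card C}"
  have "real (card L) * real (Suc s) = (\<Sum>C\<in>L. real (Suc s))" by simp
  also have "\<dots> \<le> (\<Sum>C\<in>L. real (card C))" unfolding L_def by (intro sum_mono) auto
  also have "\<dots> = real (card (\<Union>L))"
    using sum_card_components_on[OF edges fin, of L] unfolding L_def by (simp flip: of_nat_sum)
  also have "\<dots> \<le> real (card V)"
  proof -
    have "\<Union>L \<subseteq> V" using component_on_subset[OF edges] unfolding L_def by blast
    then show ?thesis using card_mono[OF fin] by simp
  qed
  also have "\<dots> < real (Suc s) * (2 * real r)"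
  proof -
    have "s * (2*r) + card V mod (2*r) = card V" unfolding s_def by (rule div_mult_mod_eq)
    moreover have "card V mod (2*r) < 2*r" using r by simp
    ultimately have "card V < Suc s * (2*r)" by (metis add_less_cancel_left mult_Suc add.commute)
    then have "real (card V) < real (Suc s * (2*r))" by linarith
    then show ?thesis by (simp add: algebra_simps)
  qed
  finally show ?thesis unfolding L_def s_def by (simp add: mult.commute)
qed

lemma component_moment_many_components:
  assumes fin: "finite V"
    and M0: "M0 \<in> perfect_matchings_on V" and M1: "M1 \<in> perfect_matchings_on V"
    and r: "1 \<le> r" and Y: "0 \<le> Y"
    and many: "Y + 3 * real r < real (card (components_on V (M0 \<union> M1)))"
  shows "Y ^ r \<le> component_moment r (card V div (2*r)) (\<lambda>_. 1) V M0 M1"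
proof -
  let ?K = "components_on V (M0 \<union> M1)" and ?s = "card V div (2*r)"
  define F where "F = small_components ?s V M0 M1"
  define L where "L = {C \<in> ?K. ?s < card C}"
  have edges: "\<forall>e\<in>M0 \<union> M1. e \<subseteq> V"
    using perfect_matching_edge_subset[OF M0] perfect_matching_edge_subset[OF M1] by auto
  have "?K = F \<union> L" "F \<inter> L = {}" unfolding F_def L_def small_components_def by auto
  moreover have "finite ?K" using finite_components_on[OF edges fin] .
  ultimately have "card ?K = card F + card L" by (metis card_Un_disjoint finite_Un)
  moreover have "real (card L) < 2 * real r"
    using card_large_components_less[OF fin edges r] unfolding L_def .
  ultimately have "Y \<le> real (card F) - real r * 1" using many by linarith
  then have "Y ^ r \<le> (max 0 (sum (\<lambda>_. 1) F - real r * 1)) ^ r"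
    using Y by (intro power_mono) auto
  also have "\<dots> \<le> (\<Sum>cs\<in>distinct_tuples r F. prod_list (map (\<lambda>_. 1) cs))"
    using power_le_sum_distinct_tuples[of F "\<lambda>_. 1" 1 r] finite_small_components[OF fin M0 M1]
    unfolding F_def by simp
  finally show ?thesis unfolding component_moment_def F_def by simp
qed

lemma component_moment_small_vertices:
  assumes fin: "finite V"
    and M0: "M0 \<in> perfect_matchings_on V" and M1: "M1 \<in> perfect_matchings_on V"
    and rs: "real r * real s \<le> B / 2"
    and covered: "B \<le> real (card (\<Union>(small_components s V M0 M1)))"
  shows "(B/2) ^ r \<le> component_moment r s real V M0 M1"
proof -
  define F where "F = small_components s V M0 M1"
  have edges: "\<forall>e\<in>M0 \<union> M1. e \<subseteq> V"
    using perfect_matching_edge_subset[OF M0] perfect_matching_edge_subset[OF M1] by auto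
  have "sum (\<lambda>C. real (card C)) F = real (card (\<Union>F))"
    using sum_card_components_on[OF edges fin, of F] unfolding F_def small_components_def
    by (simp flip: of_nat_sum)
  moreover have "0 \<le> B" using rs mult_nonneg_nonneg[of "real r" "real s"] by linarith
  ultimately have "(B/2) ^ r \<le> (max 0 (sum (\<lambda>C. real (card C)) F - real r * real s)) ^ r"
    using covered rs unfolding F_def by (intro power_mono) auto
  also have "\<dots> \<le> (\<Sum>cs\<in>distinct_tuples r F. prod_list (map (\<lambda>C. real (card C)) cs))"
  proof (rule power_le_sum_distinct_tuples)
    show "finite F" unfolding F_def using finite_small_components[OF fin M0 M1] .
  qed (auto simp: F_def small_components_def)
  finally show ?thesis unfolding component_moment_def F_def by simp
qed

lemma card_many_components_le:
  assumes fin: "finite V" and M0: "M0 \<in> perfect_matchings_on V" and card_V: "card V = 2*m"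
    and n: "2 \<le> ln (real (card V))"
  shows "real (card {M1 \<in> perfect_matchings_on V.
            10 * log 2 (real (card V)) < real (card (components_on V (M0 \<union> M1)))})
         \<le> 2 / real (card V) * real (num_matchings m)"
proof -
  define n where "n = card V"
  define lg where "lg = log 2 (real n)"
  define r where "r = nat \<lfloor>lg\<rfloor>"
  define s where "s = n div (2*r)"
  define Y where "Y = 7 * lg"
  let ?G = "component_moment r s (\<lambda>_. 1) V M0"
  have L: "2 \<le> ln (real n)" using n unfolding n_def .
  then have n_pos: "0 < real n" by (cases "n = 0") auto
  have lg: "ln (real n) \<le> lg"
  proof -
    have "ln (2::real) \<le> 1" using ln_le_minus_one[of 2] by simp
    then show ?thesis unfolding lg_def log_def using L by (simp add: field_simps)
  qed
  have r: "1 \<le> r" "real r \<le> lg" "lg - 1 \<le> real r" unfolding r_def using lg L by linarith+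
  have Y_pos: "0 < Y" unfolding Y_def using lg L by simp
  have n1: "1 \<le> n" using n_pos by simp
  have "2*r*s \<le> card V" unfolding s_def n_def by (simp add: mult.commute)
  then have "(\<Sum>M1\<in>perfect_matchings_on V. ?G M1)
      \<le> real (num_matchings m) * moment_factor s (\<lambda>_. 1) ^ r"
    using sum_component_moment_le[of "\<lambda>_. 1" V M0 m r s] fin M0 card_V by simp
  also have "\<dots> \<le> real (num_matchings m) * (2 * (1 + ln (real n))) ^ r"
  proof -
    have "s div 2 \<le> n" unfolding s_def by (meson div_le_dividend le_trans)
    then have "moment_factor s (\<lambda>_. 1) \<le> 2 * (1 + ln (real n))"
      using moment_factor_one_le n1 by blast
    then show ?thesis using moment_factor_nonneg[of "\<lambda>_. 1" s]
      by (intro mult_left_mono power_mono) auto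
  qed
  finally have sum_G: "(\<Sum>M1\<in>perfect_matchings_on V. ?G M1)
      \<le> real (num_matchings m) * (2 * (1 + ln (real n))) ^ r" .
  have bad: "{M1 \<in> perfect_matchings_on V. 10 * lg < real (card (components_on V (M0 \<union> M1)))}
      \<subseteq> {M1 \<in> perfect_matchings_on V. Y ^ r \<le> ?G M1}"
  proof clarify
    fix M1 assume M1: "M1 \<in> perfect_matchings_on V"
      and many: "10 * lg < real (card (components_on V (M0 \<union> M1)))"
    have "Y + 3 * real r < real (card (components_on V (M0 \<union> M1)))"
      using many r(2) unfolding Y_def by linarith
    then show "Y ^ r \<le> ?G M1"
      using component_moment_many_components[OF fin M0 M1 r(1)] Y_pos unfolding s_def n_def by simp
  qed
  have "real (card {M1 \<in> perfect_matchings_on V. Y ^ r \<le> ?G M1})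
      \<le> (2 * (1 + ln (real n)) / Y) ^ r * real (num_matchings m)"
    using card_power_level_set_le[OF finite_perfect_matchings_on[OF fin] _ sum_G Y_pos]
    by (simp add: component_moment_nonneg)
  also have "\<dots> \<le> (1/2) ^ r * real (num_matchings m)"
    unfolding Y_def using lg L by (intro mult_right_mono power_mono) (auto simp: field_simps)
  also have "\<dots> \<le> 2 / real n * real (num_matchings m)"
  proof -
    have "(1/2::real) ^ r = (1/2) powr real r" by (simp add: powr_realpow)
    also have "\<dots> \<le> (1/2) powr (lg - 1)" using r by (intro powr_mono') auto
    also have "\<dots> = 2 / real n"
      unfolding lg_def using n_pos by (simp add: powr_diff powr_minus_divide powr_divide)
    finally show ?thesis by (intro mult_right_mono) auto
  qed
  finally have "real (card {M1 \<in> perfect_matchings_on V. Y ^ r \<le> ?G M1})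
      \<le> 2 / real n * real (num_matchings m)" .
  moreover have
    "card {M1 \<in> perfect_matchings_on V. 10 * lg < real (card (components_on V (M0 \<union> M1)))}
      \<le> card {M1 \<in> perfect_matchings_on V. Y ^ r \<le> ?G M1}"
    using finite_perfect_matchings_on[OF fin] by (intro card_mono[OF _ bad]) auto
  ultimately show ?thesis unfolding lg_def n_def by linarith
qed

lemma card_many_small_vertices_le:
  fixes B S :: real
  assumes fin: "finite V" and M0: "M0 \<in> perfect_matchings_on V" and card_V: "card V = 2*m"
    and S_pos: "0 < S" and SB: "4 * S \<le> B" and B_le: "B \<le> real (card V)"
  shows "real (card {M1 \<in> perfect_matchings_on V.
            B < real (card (\<Union>{C \<in> components_on V (M0 \<union> M1). real (card C) \<le> S}))})
         \<le> (4 * S / B) powr (B / (2 * S) - 1) * real (num_matchings m)"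
proof -
  define t where "t = B / (2 * S)"
  define q where "q = 4 * S / B"
  define r where "r = nat \<lfloor>t\<rfloor>"
  define s where "s = nat \<lfloor>S\<rfloor>"
  let ?G = "component_moment r s real V M0"
  have B_pos: "0 < B" using S_pos SB by simp
  have t_pos: "0 < t" unfolding t_def using S_pos B_pos by simp
  have q: "0 < q" "q \<le> 1" unfolding q_def using S_pos SB B_pos by auto
  have r: "real r \<le> t" "t - 1 \<le> real r" unfolding r_def using t_pos by linarith+
  have s: "real s \<le> S" unfolding s_def using S_pos by linarith
  have rs: "real r * real s \<le> B / 2"
  proof -
    have "real r * real s \<le> t * S" using r s by (intro mult_mono) auto
    then show ?thesis unfolding t_def using S_pos by (simp add: field_simps)
  qed
  have "real (2*r*s) \<le> real (card V)" using rs B_le by simp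
  then have "2*r*s \<le> card V" by (simp only: of_nat_le_iff)
  then have "(\<Sum>M1\<in>perfect_matchings_on V. ?G M1)
      \<le> real (num_matchings m) * moment_factor s real ^ r"
    using sum_component_moment_le[of real V M0 m r s] fin M0 card_V by simp
  also have "\<dots> \<le> real (num_matchings m) * (2 * S) ^ r"
    using moment_factor_size_le[of s] moment_factor_nonneg[of real s] s
    by (intro mult_left_mono power_mono) auto
  finally have sum_G: "(\<Sum>M1\<in>perfect_matchings_on V. ?G M1) \<le> real (num_matchings m) * (2 * S) ^ r" .
  have small: "{C \<in> components_on V (M0 \<union> M1). real (card C) \<le> S} = small_components s V M0 M1"
    for M1
  proof -
    have "real k \<le> S \<longleftrightarrow> k \<le> s" for k unfolding s_def using S_pos by linarith
    then show ?thesis unfolding small_components_def by auto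
  qed
  have bad: "{M1 \<in> perfect_matchings_on V.
        B < real (card (\<Union>{C \<in> components_on V (M0 \<union> M1). real (card C) \<le> S}))}
      \<subseteq> {M1 \<in> perfect_matchings_on V. (B/2) ^ r \<le> ?G M1}"
    using component_moment_small_vertices[OF fin M0 _ rs] small by fastforce
  have "real (card {M1 \<in> perfect_matchings_on V. (B/2) ^ r \<le> ?G M1})
      \<le> (2 * S / (B/2)) ^ r * real (num_matchings m)"
    using card_power_level_set_le[OF finite_perfect_matchings_on[OF fin] _ sum_G, of "B/2"] B_pos
    by (simp add: component_moment_nonneg)
  also have "\<dots> = q ^ r * real (num_matchings m)"
    unfolding q_def using B_pos by (simp add: field_simps)
  also have "\<dots> \<le> q powr (t - 1) * real (num_matchings m)"
  proof -
    have "q ^ r = q powr real r" using q by (simp add: powr_realpow)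
    also have "\<dots> \<le> q powr (t - 1)" using q r by (intro powr_mono') auto
    finally show ?thesis by (intro mult_right_mono) auto
  qed
  finally have "real (card {M1 \<in> perfect_matchings_on V. (B/2) ^ r \<le> ?G M1})
      \<le> q powr (t - 1) * real (num_matchings m)" .
  moreover have "card {M1 \<in> perfect_matchings_on V.
        B < real (card (\<Union>{C \<in> components_on V (M0 \<union> M1). real (card C) \<le> S}))}
      \<le> card {M1 \<in> perfect_matchings_on V. (B/2) ^ r \<le> ?G M1}"
    using finite_perfect_matchings_on[OF fin] by (intro card_mono[OF _ bad]) auto
  ultimately show ?thesis unfolding q_def t_def by linarith
qed

lemma fail_prob_le:
  assumes ev: "even n" and M0: "M0 \<in> perfect_matchings n" and n: "2 \<le> ln (real n)"
    and n_c: "0 < n_c n" and n_cb: "4 * n_c n \<le> n_b n" and n_b: "n_b n \<le> real n"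
  shows "fail_prob n M0 \<le> 2 / real n + (4 * n_c n / n_b n) powr (n_b n / (2 * n_c n) - 1)"
proof -
  define V where "V = {..<n}"
  define m where "m = n div 2"
  have fin: "finite V" and card_V: "card V = 2*m" and n_V: "card V = n"
    unfolding V_def m_def using ev by auto
  have pm: "perfect_matchings n = perfect_matchings_on V" unfolding V_def perfect_matchings_eq ..
  have comps: "components n E = components_on V E" for E
    unfolding V_def components_eq_components_on ..
  have M0V: "M0 \<in> perfect_matchings_on V" using M0 pm by simp
  let ?A = "{M1 \<in> perfect_matchings_on V.
              10 * log 2 (real n) < real (card (components_on V (M0 \<union> M1)))}"
  let ?B = "{M1 \<in> perfect_matchings_on V.
              n_b n < real (card (\<Union>{C \<in> components_on V (M0 \<union> M1). real (card C) \<le> n_c n}))}"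
  have "{M1 \<in> perfect_matchings n. \<not> good_event n M0 M1} \<subseteq> ?A \<union> ?B"
    unfolding good_event_def pm comps by auto
  then have "card {M1 \<in> perfect_matchings n. \<not> good_event n M0 M1} \<le> card (?A \<union> ?B)"
    using finite_perfect_matchings_on[OF fin] by (intro card_mono) auto
  also have "\<dots> \<le> card ?A + card ?B" by (rule card_Un_le)
  finally have "real (card {M1 \<in> perfect_matchings n. \<not> good_event n M0 M1})
      \<le> (2 / real n + (4 * n_c n / n_b n) powr (n_b n / (2 * n_c n) - 1)) * real (num_matchings m)"
    using card_many_components_le[OF fin M0V card_V]
      card_many_small_vertices_le[OF fin M0V card_V n_c n_cb] n n_b n_V
    by (simp add: algebra_simps)
  moreover have "real (card (perfect_matchings n)) = real (num_matchings m)"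
    using card_perfect_matchings_on[OF fin card_V] pm by simp
  ultimately show ?thesis
    unfolding fail_prob_def using num_matchings_pos[of m] by (simp add: divide_simps)
qed

lemma eventually_fail_bound:
  assumes \<epsilon>: "0 < \<epsilon>"
  shows "\<forall>\<^sub>F n in sequentially. 2 \<le> ln (real n) \<and> 0 < n_c n \<and> 4 * n_c n \<le> n_b n
    \<and> n_b n \<le> real n
    \<and> 2 / real n + (4 * n_c n / n_b n) powr (n_b n / (2 * n_c n) - 1) \<le> \<epsilon> * real n powr (-0.51)"
proof -
  let ?c = "\<lambda>x::real. 200 * x / ln x" and ?b = "\<lambda>x::real. x * ln (ln (ln x)) / ln (ln x)"
  let ?f = "\<lambda>x. 2 / x + (4 * ?c x / ?b x) powr (?b x / (2 * ?c x) - 1)"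
  have "((\<lambda>x. ?f x / x powr (-0.51)) \<longlongrightarrow> 0) at_top" by real_asymp
  then have "\<forall>\<^sub>F x in at_top. ?f x / x powr (-0.51) < \<epsilon>" using \<epsilon> by (rule order_tendstoD)
  moreover have "\<forall>\<^sub>F x in at_top. 2 \<le> ln x \<and> 0 < ?c x \<and> 4 * ?c x \<le> ?b x \<and> ?b x \<le> x"
    by (intro eventually_conj) real_asymp+
  ultimately have "\<forall>\<^sub>F x in at_top. 2 \<le> ln x \<and> 0 < ?c x \<and> 4 * ?c x \<le> ?b x \<and> ?b x \<le> x
      \<and> ?f x \<le> \<epsilon> * x powr (-0.51)"
    by eventually_elim (auto simp: pos_divide_less_eq)
  then show ?thesis
    unfolding n_b_def n_c_def
    using filterlim_real_sequentially by (rule eventually_compose_filterlim)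
qed

theorem mainTheorem8:
  fixes M0 :: "nat \<Rightarrow> nat set set"
  assumes "\<And>n. even n \<Longrightarrow> M0 n \<in> perfect_matchings n"
  shows "\<forall>\<epsilon>>0. \<forall>\<^sub>F n in sequentially.
           even n \<longrightarrow> fail_prob n (M0 n) \<le> \<epsilon> * real n powr (-0.51)"
proof (intro allI impI)
  fix \<epsilon> :: real assume "\<epsilon> > 0"
  from eventually_fail_bound[OF this]
  show "\<forall>\<^sub>F n in sequentially. even n \<longrightarrow> fail_prob n (M0 n) \<le> \<epsilon> * real n powr (-0.51)"
    by eventually_elim (use fail_prob_le assms in fastforce)
qed

end
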